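(* Let $\bar\gamma_{\mathrm{R}},\bar\gamma_{\mathrm{D}},\bar\gamma_{\mathrm{E}}>0$ and $\mathcal{R}>0$. Let $h_{\mathrm{S},\mathrm{R}},h_{\mathrm{R},\mathrm{D}},h_{\mathrm{S},\mathrm{E}}$ be independent $\mathcal{CN}(0,1)$ random variables. Define $$\mathcal{R}^{2}_{\mathrm{S}\to\mathrm{R}}=\log_2\frac{1+\bar\gamma_{\mathrm{R}}|h_{\mathrm{S},\mathrm{R}}|^2}{1+\bar\gamma_{\mathrm{E}}|h_{\mathrm{S},\mathrm{E}}|^2},\qquad \mathcal{R}^{2}_{\mathrm{R}\to\mathrm{D}}=\log_2\left(1+\bar\gamma_{\mathrm{D}}|h_{\mathrm{R},\mathrm{D}}|^2\right),$$ $\mathcal{R}_2=\max\{\min\{\mathcal{R}^{2}_{\mathrm{S}\to\mathrm{R}},\mathcal{R}^{2}_{\mathrm{R}\to\mathrm{D}}\},0\}$ and $\mathcal{P}_2=\Pr(\mathcal{R}_2<\mathcal{R})$. Then $$\mathcal{P}_2=1-\mathrm{e}^{-\frac{2^{\mathcal{R}}-1}{\bar\gamma_{\mathrm{D}}}-\frac{2^{\mathcal{R}}-1}{\bar\gamma_{\mathrm{R}}}}\cdot\frac{1}{1+\frac{2^{\mathcal{R}}}{\bar\gamma_{\mathrm{R}}}\bar\gamma_{\mathrm{E}}}.$$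
   Context: This models a decode-and-forward relay system (source S, relay R, destination D, eavesdropper E) where the eavesdropper overhears only the source's transmission. $\mathcal{CN}(0,1)$ denotes a circularly symmetric complex Gaussian random variable with zero mean and unit variance (Rayleigh fading). $\bar\gamma$'s are average SNRs, $\mathcal{R}_2$ the secrecy capacity and $\mathcal{P}_2$ the secrecy outage probability. *)

theory Defs
  imports "HOL-Probability.Probability"
begin

definition CN01 :: "'a measure \<Rightarrow> ('a \<Rightarrow> complex) \<Rightarrow> bool" where
  "CN01 M h \<longleftrightarrow> distributed M lborel h (\<lambda>z. ennreal (exp (- (cmod z)\<^sup>2) / pi))"

definition rate_SR2 :: "real \<Rightarrow> real \<Rightarrow> complex \<Rightarrow> complex \<Rightarrow> real" where
  "rate_SR2 gR gE hSR hSE = log 2 ((1 + gR * (cmod hSR)\<^sup>2) / (1 + gE * (cmod hSE)\<^sup>2))"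

definition rate_RD2 :: "real \<Rightarrow> complex \<Rightarrow> real" where
  "rate_RD2 gD hRD = log 2 (1 + gD * (cmod hRD)\<^sup>2)"

definition secrecy_cap2 :: "real \<Rightarrow> real \<Rightarrow> real \<Rightarrow> complex \<Rightarrow> complex \<Rightarrow> complex \<Rightarrow> real" where
  "secrecy_cap2 gR gD gE hSR hRD hSE =
     max (min (rate_SR2 gR gE hSR hSE) (rate_RD2 gD hRD)) 0"

end

theory Submission
  imports Defs "HOL-Real_Asymp.Real_Asymp"
begin

(* If h is CN(0,1) then |h|^2 is exponentially distributed with mean 1: writing exp(-|z|^2)
   as the integral of exp(-s) over s >= |z|^2 and using that the annulus t < |z|^2 <= s has
   area pi (s - t) gives P(|h|^2 > t) = exp(-t).
   With a = (2^R - 1)/gD, alpha = (2^R - 1)/gR and beta = 2^R gE/gR, the secrecy capacity is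
   at least R iff |hRD|^2 >= a and |hSR|^2 >= alpha + beta |hSE|^2.  By independence this
   event has probability exp(-a) E[exp(-alpha - beta |hSE|^2)] = exp(-a) exp(-alpha)/(1 + beta). *)

lemma nn_integral_exp_Ici:
  fixes c r :: real
  assumes "0 < c"
  shows "(\<integral>\<^sup>+s. ennreal (exp (- c * s)) * indicator {r..} s \<partial>lborel) = ennreal (exp (- c * r) / c)"
proof -
  have "(\<integral>\<^sup>+s. ennreal (exp (- c * s)) * indicator {r..} s \<partial>lborel) = 0 - (- exp (- c * r) / c)"
  proof (rule nn_integral_FTC_atLeast[where F = "\<lambda>s. - exp (- c * s) / c"])
    show "((\<lambda>s. - exp (- c * s) / c) \<longlongrightarrow> 0) at_top"
      using assms by real_asymp
  qed (use assms in \<open>auto intro!: derivative_eq_intros\<close>)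
  then show ?thesis by simp
qed

lemma emeasure_exponential_Ici:
  assumes "0 < l" "0 \<le> c"
  shows "emeasure (density lborel (exponential_density l)) {c..} = ennreal (exp (- c * l))"
proof -
  have "emeasure (density lborel (exponential_density l)) {c..}
      = (\<integral>\<^sup>+x. ennreal l * (ennreal (exp (- l * x)) * indicator {c..} x) \<partial>lborel)"
    using assms
    by (subst emeasure_density)
       (auto intro!: nn_integral_cong split: split_indicator
             simp: exponential_density_def ennreal_mult' mult.commute)
  also have "\<dots> = ennreal l * ennreal (exp (- l * c) / l)"
    using assms nn_integral_exp_Ici[of l c] by (subst nn_integral_cmult) auto
  also have "\<dots> = ennreal (exp (- c * l))"
    using assms by (simp add: ennreal_mult'[symmetric] mult.commute)
  finally show ?thesis .
qed

lemma nn_integral_exponential_laplace: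
  assumes "0 < l" "0 \<le> b"
  shows "(\<integral>\<^sup>+x. ennreal (exp (- b * x)) \<partial>density lborel (exponential_density l)) = ennreal (l / (l + b))"
proof -
  have "(\<integral>\<^sup>+x. ennreal (exp (- b * x)) \<partial>density lborel (exponential_density l))
      = (\<integral>\<^sup>+x. ennreal l * (ennreal (exp (- (l + b) * x)) * indicator {0..} x) \<partial>lborel)"
    using assms
    by (subst nn_integral_density)
       (auto intro!: nn_integral_cong split: split_indicator
             simp: exponential_density_def ennreal_mult'[symmetric] exp_add[symmetric] algebra_simps)
  also have "\<dots> = ennreal l * ennreal (exp (- (l + b) * 0) / (l + b))"
    using assms nn_integral_exp_Ici[of "l + b" 0] by (subst nn_integral_cmult) auto
  also have "\<dots> = ennreal (l / (l + b))"
    using assms by (simp add: ennreal_mult'[symmetric])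
  finally show ?thesis .
qed

lemma halfplane_in_sets_borel_pair:
  fixes \<alpha> \<beta> :: real
  shows "{(u, v). \<alpha> + \<beta> * u \<le> v} \<in> sets (borel \<Otimes>\<^sub>M borel)"
proof -
  have "{(u, v). \<alpha> + \<beta> * u \<le> v} = {p \<in> space (borel \<Otimes>\<^sub>M borel). \<alpha> + \<beta> * fst p \<le> (snd p :: real)}"
    by (auto simp: space_pair_measure)
  also have "\<dots> \<in> sets (borel \<Otimes>\<^sub>M borel)" by measurable
  finally show ?thesis .
qed

lemma emeasure_exponential_pair_affine_le:
  fixes l m \<alpha> \<beta> :: real
  defines "L \<equiv> density lborel (exponential_density l)" and "K \<equiv> density lborel (exponential_density m)"
  assumes "0 < l" "0 < m" "0 \<le> \<alpha>" "0 \<le> \<beta>"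
  shows "emeasure (L \<Otimes>\<^sub>M K) {(u, v). \<alpha> + \<beta> * u \<le> v} = ennreal (exp (- m * \<alpha>) * (l / (l + m * \<beta>)))"
proof -
  interpret K: prob_space K
    unfolding K_def by (rule prob_space_exponential_density) fact
  have sets: "{(u, v). \<alpha> + \<beta> * u \<le> v} \<in> sets (L \<Otimes>\<^sub>M K)"
    using halfplane_in_sets_borel_pair by (simp add: L_def K_def cong: sets_pair_measure_cong)
  have nonneg: "AE u in L. 0 \<le> u"
    unfolding L_def by (subst AE_density) (auto simp: exponential_density_def)
  have "emeasure (L \<Otimes>\<^sub>M K) {(u, v). \<alpha> + \<beta> * u \<le> v} = (\<integral>\<^sup>+u. emeasure K {\<alpha> + \<beta> * u..} \<partial>L)"
    by (subst K.emeasure_pair_measure_alt[OF sets]) (auto intro!: nn_integral_cong arg_cong2[where f=emeasure])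
  also have "\<dots> = (\<integral>\<^sup>+u. ennreal (exp (- m * \<alpha>)) * ennreal (exp (- (m * \<beta>) * u)) \<partial>L)"
    using nonneg
  proof (intro nn_integral_cong_AE, eventually_elim)
    case (elim u)
    then show ?case
      using assms unfolding K_def
      by (simp add: emeasure_exponential_Ici ennreal_mult'[symmetric] exp_add[symmetric] algebra_simps)
  qed
  also have "\<dots> = ennreal (exp (- m * \<alpha>)) * ennreal (l / (l + m * \<beta>))"
    using assms nn_integral_exponential_laplace[of l "m * \<beta>"] unfolding L_def
    by (subst nn_integral_cmult) auto
  finally show ?thesis
    by (simp add: ennreal_mult'[symmetric])
qed

lemma (in prob_space) prob_exponential_ge:
  assumes "distributed M lborel X (exponential_density l)" "0 < l" "0 \<le> c"
  shows "prob {\<omega> \<in> space M. c \<le> X \<omega>} = exp (- c * l)"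
proof -
  have "emeasure M {\<omega> \<in> space M. c \<le> X \<omega>} = emeasure (distr M lborel X) {c..}"
    using assms(1) by (subst emeasure_distr) (auto simp: distributed_def intro!: arg_cong[where f = "emeasure M"])
  also have "\<dots> = ennreal (exp (- c * l))"
    using assms by (simp add: distributed_def emeasure_exponential_Ici)
  finally show ?thesis
    by (simp add: measure_def)
qed

lemma (in prob_space) prob_exponential_affine_le:
  assumes "indep_var borel U borel V"
    and "distributed M lborel U (exponential_density l)" "distributed M lborel V (exponential_density m)"
    and "0 < l" "0 < m" "0 \<le> \<alpha>" "0 \<le> \<beta>"
  shows "prob {\<omega> \<in> space M. \<alpha> + \<beta> * U \<omega> \<le> V \<omega>} = exp (- m * \<alpha>) * (l / (l + m * \<beta>))"
proof -
  have distr_borel: "distr M borel X = density lborel f" if "distributed M lborel X f" for X :: "'a \<Rightarrow> real" and f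
    using that by (simp add: distributed_def cong: distr_cong)
  have joint: "distr M (borel \<Otimes>\<^sub>M borel) (\<lambda>\<omega>. (U \<omega>, V \<omega>))
      = density lborel (exponential_density l) \<Otimes>\<^sub>M density lborel (exponential_density m)"
    using assms(1-3) by (simp add: indep_var_distribution_eq distr_borel)
  have "{\<omega> \<in> space M. \<alpha> + \<beta> * U \<omega> \<le> V \<omega>} = (\<lambda>\<omega>. (U \<omega>, V \<omega>)) -` {(u, v). \<alpha> + \<beta> * u \<le> v} \<inter> space M"
    by auto
  then have "emeasure M {\<omega> \<in> space M. \<alpha> + \<beta> * U \<omega> \<le> V \<omega>}
      = emeasure (distr M (borel \<Otimes>\<^sub>M borel) (\<lambda>\<omega>. (U \<omega>, V \<omega>))) {(u, v). \<alpha> + \<beta> * u \<le> v}"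
    using assms(1) halfplane_in_sets_borel_pair
    by (subst emeasure_distr) (auto simp: indep_var_distribution_eq)
  also have "\<dots> = ennreal (exp (- m * \<alpha>) * (l / (l + m * \<beta>)))"
    unfolding joint using assms(4-) by (rule emeasure_exponential_pair_affine_le)
  finally show ?thesis
    using assms(4-) by (simp add: measure_def)
qed

lemma (in prob_space) prob_exponential_ge_and_affine_le:
  assumes indep: "indep_vars (\<lambda>_. borel) (\<lambda>i. [U0, U1, U2] ! i) {0..<3}"
    and exp: "distributed M lborel U0 (exponential_density l0)"
      "distributed M lborel U1 (exponential_density l1)"
      "distributed M lborel U2 (exponential_density l2)"
    and "0 < l0" "0 < l1" "0 < l2" "0 \<le> a" "0 \<le> \<alpha>" "0 \<le> \<beta>"
  shows "prob {\<omega> \<in> space M. a \<le> U1 \<omega> \<and> \<alpha> + \<beta> * U2 \<omega> \<le> U0 \<omega>}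
    = exp (- a * l1) * (exp (- l0 * \<alpha>) * (l2 / (l2 + l0 * \<beta>)))"
proof -
  let ?X = "\<lambda>i. [U0, U1, U2] ! i"
  let ?Y = "\<lambda>\<omega>. \<lambda>i\<in>{1}. ?X i \<omega>" and ?Z = "\<lambda>\<omega>. \<lambda>i\<in>{0, 2}. ?X i \<omega>"
  let ?A = "{x \<in> space (PiM {1} (\<lambda>_. borel)). a \<le> x (1 :: nat)}"
  let ?B = "{x \<in> space (PiM {0, 2} (\<lambda>_. borel)). \<alpha> + \<beta> * x (2 :: nat) \<le> x 0}"
  have "indep_var (PiM {1} (\<lambda>_. borel)) ?Y (PiM {0, 2} (\<lambda>_. borel)) ?Z"
    by (rule indep_var_restrict[OF indep]) auto
  then have "prob ((\<lambda>\<omega>. (?Y \<omega>, ?Z \<omega>)) -` (?A \<times> ?B) \<inter> space M)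
      = prob (?Y -` ?A \<inter> space M) * prob (?Z -` ?B \<inter> space M)"
    by (rule indep_varD) measurable
  moreover have "(\<lambda>\<omega>. (?Y \<omega>, ?Z \<omega>)) -` (?A \<times> ?B) \<inter> space M
      = {\<omega> \<in> space M. a \<le> U1 \<omega> \<and> \<alpha> + \<beta> * U2 \<omega> \<le> U0 \<omega>}"
    "?Y -` ?A \<inter> space M = {\<omega> \<in> space M. a \<le> U1 \<omega>}"
    "?Z -` ?B \<inter> space M = {\<omega> \<in> space M. \<alpha> + \<beta> * U2 \<omega> \<le> U0 \<omega>}"
    by (auto simp: space_PiM)
  ultimately have "prob {\<omega> \<in> space M. a \<le> U1 \<omega> \<and> \<alpha> + \<beta> * U2 \<omega> \<le> U0 \<omega>}
      = prob {\<omega> \<in> space M. a \<le> U1 \<omega>} * prob {\<omega> \<in> space M. \<alpha> + \<beta> * U2 \<omega> \<le> U0 \<omega>}"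
    by simp
  moreover have "indep_var borel U2 borel U0"
    using indep_var_compose[OF indep_var_restrict[OF indep, of "{2}" "{0}"], of "\<lambda>x. x 2" borel "\<lambda>x. x 0" borel]
    by (simp add: comp_def)
  ultimately show ?thesis
    using assms(5-) by (simp add: prob_exponential_ge[OF exp(2)] prob_exponential_affine_le[OF _ exp(3,1)])
qed

lemma emeasure_lborel_annulus:
  fixes t s :: real
  assumes "0 \<le> t" "t \<le> s"
  shows "emeasure (lborel :: complex measure) {z. t < (cmod z)\<^sup>2 \<and> (cmod z)\<^sup>2 \<le> s} = ennreal (pi * (s - t))"
proof -
  have norm_le_sqrt: "cmod z \<le> sqrt r \<longleftrightarrow> (cmod z)\<^sup>2 \<le> r" if "0 \<le> r" for z :: complex and r
    using real_sqrt_le_iff[of "(cmod z)\<^sup>2" r] by simp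
  have annulus: "{z. t < (cmod z)\<^sup>2 \<and> (cmod z)\<^sup>2 \<le> s} = cball 0 (sqrt s) - cball 0 (sqrt t)"
    using assms by (auto simp: dist_norm norm_le_sqrt)
  have "cball (0 :: complex) (sqrt t) \<subseteq> cball 0 (sqrt s)"
    using assms by (simp add: subset_cball)
  then have "emeasure (lborel :: complex measure) {z. t < (cmod z)\<^sup>2 \<and> (cmod z)\<^sup>2 \<le> s}
      = emeasure lborel (cball (0 :: complex) (sqrt s)) - emeasure lborel (cball (0 :: complex) (sqrt t))"
    unfolding annulus using assms by (intro emeasure_Diff) (auto simp: emeasure_cball)
  also have "\<dots> = ennreal (pi * s) - ennreal (pi * t)"
    using assms by (simp add: emeasure_cball unit_ball_vol_2)
  finally show ?thesis
    using assms by (simp add: ennreal_minus right_diff_distrib)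
qed

lemma nn_integral_gaussian_tail:
  fixes t :: real
  assumes "0 \<le> t"
  shows "(\<integral>\<^sup>+z. ennreal (exp (- (cmod z)\<^sup>2)) * indicator {z. t < (cmod z)\<^sup>2} z \<partial>(lborel :: complex measure))
      = ennreal (pi * exp (- t))"
proof -
  let ?A = "\<lambda>s. {z :: complex. t < (cmod z)\<^sup>2 \<and> (cmod z)\<^sup>2 \<le> s}"
  have layer: "ennreal (exp (- (cmod z)\<^sup>2)) = (\<integral>\<^sup>+s. ennreal (exp (- s)) * indicator {(cmod z)\<^sup>2..} s \<partial>lborel)"
    for z :: complex
    using nn_integral_exp_Ici[of 1 "(cmod z)\<^sup>2"] by simp
  have "(\<integral>\<^sup>+z. ennreal (exp (- (cmod z)\<^sup>2)) * indicator {z. t < (cmod z)\<^sup>2} z \<partial>(lborel :: complex measure))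
      = (\<integral>\<^sup>+z. \<integral>\<^sup>+s. ennreal (exp (- s)) * indicator (?A s) z \<partial>lborel \<partial>lborel)"
    by (simp add: layer nn_integral_multc[symmetric] mult.assoc indicator_inter_arith[symmetric])
       (auto intro!: nn_integral_cong split: split_indicator)
  also have "\<dots> = (\<integral>\<^sup>+s. \<integral>\<^sup>+z. ennreal (exp (- s)) * indicator (?A s) z \<partial>lborel \<partial>lborel)"
    by (rule lborel_pair.Fubini'[symmetric]) (simp add: indicator_def case_prod_beta)
  also have "\<dots> = (\<integral>\<^sup>+s. ennreal (exp (- s)) * emeasure lborel (?A s) \<partial>lborel)"
    by (intro nn_integral_cong nn_integral_cmult_indicator) measurable
  also have "\<dots> = (\<integral>\<^sup>+s. ennreal (pi * ((s - t) * exp (- s))) * indicator {t..} s \<partial>lborel)"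
  proof (intro nn_integral_cong)
    fix s :: real
    show "ennreal (exp (- s)) * emeasure lborel (?A s) = ennreal (pi * ((s - t) * exp (- s))) * indicator {t..} s"
    proof (cases "t \<le> s")
      case True
      then show ?thesis
        using assms by (simp add: emeasure_lborel_annulus ennreal_mult'[symmetric] mult_ac)
    next
      case False
      then have empty: "?A s = {}" by auto
      show ?thesis
        using False by (simp only: empty emeasure_empty) simp
    qed
  qed
  also have "\<dots> = (\<integral>\<^sup>+u. ennreal (pi * exp (- t)) * (ennreal (u ^ 1 * exp (- u)) * indicator {0..} u) \<partial>lborel)"
    by (subst nn_integral_real_affine[where c = 1 and t = t])
       (auto intro!: nn_integral_cong split: split_indicator
             simp: ennreal_mult'[symmetric] exp_add[symmetric] mult_ac)
  also have "\<dots> = ennreal (pi * exp (- t))"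
    using nn_intergal_power_times_exp_Ici[of 1] by (subst nn_integral_cmult) auto
  finally show ?thesis .
qed

lemma (in prob_space) CN01_norm_sq_exponential:
  assumes "CN01 M h"
  shows "distributed M lborel (\<lambda>\<omega>. (cmod (h \<omega>))\<^sup>2) (exponential_density 1)"
proof -
  have h: "distributed M lborel h (\<lambda>z. ennreal (exp (- (cmod z)\<^sup>2) / pi))"
    using assms unfolding CN01_def .
  then have [measurable]: "h \<in> borel_measurable M"
    by (simp add: distributed_def)
  have tail: "emeasure M {\<omega> \<in> space M. a < (cmod (h \<omega>))\<^sup>2} = ennreal (exp (- a))" if "0 \<le> a" for a
  proof -
    have "emeasure M {\<omega> \<in> space M. a < (cmod (h \<omega>))\<^sup>2} = emeasure M (h -` {z. a < (cmod z)\<^sup>2} \<inter> space M)"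
      by (rule arg_cong[where f = "emeasure M"]) auto
    also have "\<dots> = (\<integral>\<^sup>+z. ennreal (exp (- (cmod z)\<^sup>2) / pi) * indicator {z. a < (cmod z)\<^sup>2} z \<partial>lborel)"
      using h by (rule distributed_emeasure) measurable
    also have "\<dots> = ennreal (1 / pi) * (\<integral>\<^sup>+z. ennreal (exp (- (cmod z)\<^sup>2)) * indicator {z. a < (cmod z)\<^sup>2} z \<partial>lborel)"
      by (subst nn_integral_cmult[symmetric])
         (auto intro!: nn_integral_cong simp: ennreal_mult' divide_inverse mult_ac)
    also have "\<dots> = ennreal (exp (- a))"
      using that by (simp add: nn_integral_gaussian_tail ennreal_mult'[symmetric])
    finally show ?thesis .
  qed
  show ?thesis
  proof (rule exponential_distributedI)
    fix a :: real assume "0 \<le> a"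
    have "{\<omega> \<in> space M. (cmod (h \<omega>))\<^sup>2 \<le> a} = space M - {\<omega> \<in> space M. a < (cmod (h \<omega>))\<^sup>2}"
      by auto
    then show "emeasure M {\<omega> \<in> space M. (cmod (h \<omega>))\<^sup>2 \<le> a} = 1 - ennreal (exp (- a * 1))"
      using \<open>0 \<le> a\<close> by (simp add: emeasure_compl tail emeasure_space_1 ennreal_minus flip: ennreal_1)
  qed auto
qed

lemma rate_RD2_ge_iff:
  assumes "0 < gD"
  shows "R \<le> rate_RD2 gD h \<longleftrightarrow> (2 powr R - 1) / gD \<le> (cmod h)\<^sup>2"
proof -
  have "R \<le> rate_RD2 gD h \<longleftrightarrow> 2 powr R \<le> 1 + gD * (cmod h)\<^sup>2"
    unfolding rate_RD2_def using assms by (intro le_log_iff) (auto intro: add_pos_nonneg)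
  also have "\<dots> \<longleftrightarrow> (2 powr R - 1) / gD \<le> (cmod h)\<^sup>2"
    using assms by (subst pos_divide_le_eq) (auto simp: mult.commute)
  finally show ?thesis .
qed

lemma rate_SR2_ge_iff:
  assumes "0 < gR" "0 \<le> gE"
  shows "R \<le> rate_SR2 gR gE hSR hSE
    \<longleftrightarrow> (2 powr R - 1) / gR + 2 powr R / gR * gE * (cmod hSE)\<^sup>2 \<le> (cmod hSR)\<^sup>2"
proof -
  have pos: "0 < 1 + gE * (cmod hSE)\<^sup>2" "0 < 1 + gR * (cmod hSR)\<^sup>2"
    using assms by (auto intro: add_pos_nonneg)
  have "R \<le> rate_SR2 gR gE hSR hSE \<longleftrightarrow> 2 powr R \<le> (1 + gR * (cmod hSR)\<^sup>2) / (1 + gE * (cmod hSE)\<^sup>2)"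
    unfolding rate_SR2_def using pos by (intro le_log_iff) auto
  also have "\<dots> \<longleftrightarrow> 2 powr R * (1 + gE * (cmod hSE)\<^sup>2) \<le> 1 + gR * (cmod hSR)\<^sup>2"
    using pos by (simp add: pos_le_divide_eq)
  also have "\<dots> \<longleftrightarrow> ((2 powr R - 1) + 2 powr R * gE * (cmod hSE)\<^sup>2) / gR \<le> (cmod hSR)\<^sup>2"
    using assms by (subst pos_divide_le_eq) (auto simp: algebra_simps)
  also have "\<dots> \<longleftrightarrow> (2 powr R - 1) / gR + 2 powr R / gR * gE * (cmod hSE)\<^sup>2 \<le> (cmod hSR)\<^sup>2"
    by (simp add: add_divide_distrib)
  finally show ?thesis .
qed

lemma secrecy_cap2_ge_iff:
  assumes "0 < R"
  shows "R \<le> secrecy_cap2 gR gD gE hSR hRD hSE \<longleftrightarrow> R \<le> rate_SR2 gR gE hSR hSE \<and> R \<le> rate_RD2 gD hRD"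
  using assms by (auto simp: secrecy_cap2_def)

theorem theorem4:
  fixes M :: "'a measure" and hSR hRD hSE :: "'a \<Rightarrow> complex"
    and gR gD gE R :: real
  assumes "prob_space M"
    and "gR > 0" and "gD > 0" and "gE > 0" and "R > 0"
    and "CN01 M hSR" and "CN01 M hRD" and "CN01 M hSE"
    and "prob_space.indep_vars M (\<lambda>_. borel) (\<lambda>i. [hSR, hRD, hSE] ! i) {0..<3}"
  shows "measure M {\<omega> \<in> space M. secrecy_cap2 gR gD gE (hSR \<omega>) (hRD \<omega>) (hSE \<omega>) < R}
         = 1 - exp (- (2 powr R - 1) / gD - (2 powr R - 1) / gR)
               * (1 / (1 + (2 powr R / gR) * gE))"
proof -
  interpret prob_space M by fact
  define U where "U h = (\<lambda>\<omega>. (cmod (h \<omega>))\<^sup>2)" for h :: "'a \<Rightarrow> complex"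
  define a \<alpha> \<beta> where "a = (2 powr R - 1) / gD" and "\<alpha> = (2 powr R - 1) / gR" and "\<beta> = 2 powr R / gR * gE"
  have params: "0 \<le> a" "0 \<le> \<alpha>" "0 \<le> \<beta>"
    using assms(2-5) by (auto simp: a_def \<alpha>_def \<beta>_def ge_one_powr_ge_zero)
  have exponent: "- (2 powr R - 1) / gD - (2 powr R - 1) / gR = - a + - \<alpha>"
    by (simp add: a_def \<alpha>_def diff_divide_distrib)
  have indep: "indep_vars (\<lambda>_. borel) (\<lambda>i. [U hSR, U hRD, U hSE] ! i) {0..<3}"
  proof (subst indep_vars_cong)
    show "indep_vars (\<lambda>_. borel) (\<lambda>i \<omega>. (cmod (([hSR, hRD, hSE] ! i) \<omega>))\<^sup>2) {0..<3}"
      using indep_vars_compose2[OF assms(9), of "\<lambda>_ z. (cmod z)\<^sup>2" "\<lambda>_. borel"] by simp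
  qed (auto simp: U_def less_Suc_eq numeral_3_eq_3)
  have [measurable]: "U h \<in> borel_measurable M" if "CN01 M h" for h
    using CN01_norm_sq_exponential[OF that] by (simp add: U_def distributed_def)
  have "{\<omega> \<in> space M. secrecy_cap2 gR gD gE (hSR \<omega>) (hRD \<omega>) (hSE \<omega>) < R}
      = space M - {\<omega> \<in> space M. a \<le> U hRD \<omega> \<and> \<alpha> + \<beta> * U hSE \<omega> \<le> U hSR \<omega>}"
    using assms(2-5) by (auto simp: secrecy_cap2_ge_iff rate_SR2_ge_iff rate_RD2_ge_iff U_def a_def \<alpha>_def \<beta>_def
        simp flip: not_le)
  then have "measure M {\<omega> \<in> space M. secrecy_cap2 gR gD gE (hSR \<omega>) (hRD \<omega>) (hSE \<omega>) < R}
      = 1 - exp (- a) * (exp (- \<alpha>) * (1 / (1 + \<beta>)))"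
    using prob_exponential_ge_and_affine_le[OF indep, of 1 1 1] assms(6-8) params
    by (simp add: prob_compl CN01_norm_sq_exponential[unfolded U_def[symmetric]])
  also have "\<dots> = 1 - exp (- (2 powr R - 1) / gD - (2 powr R - 1) / gR) * (1 / (1 + (2 powr R / gR) * gE))"
    unfolding exponent \<beta>_def exp_add by simp
  finally show ?thesis .
qed

end
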